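(* Let $\Lambda$ be a row-finite $k$-graph with no sources. (1) If $\Lambda$ is strongly connected then $\Lambda$ is cofinal. (2) If $\Lambda$ is cofinal, has no sinks and $\Lambda^0$ is finite, then $\Lambda$ is strongly connected.
   Context: A $k$-graph is a countable category $\Lambda$ with a functor $d:\Lambda\to\mathbb{N}^k$ with unique factorisation; $\Lambda^n=d^{-1}(n)$, $\Lambda^0$ = vertices, $uXv=\{\lambda\in X:r(\lambda)=u,s(\lambda)=v\}$. Row-finite: $v\Lambda^n$ finite; no sources: $v\Lambda^n\ne\emptyset$ for $n\ne0$; no sinks: $\Lambda^nv\ne\emptyset$ for $n\ne0$. For $N\in\mathbb{N}^k$, $N>0$ means $N_i>0$ for all $i$. $\Lambda$ is strongly connected if for all $u,v\in\Lambda^0$ there is $N>0$ with $u\Lambda^Nv\ne\emptyset$. $\Lambda$ is cofinal if for all $v,w\in\Lambda^0$ there is $N\in\mathbb{N}^k$ such that $v\Lambda s(\alpha)\ne\emptyset$ for every $\alpha\in w\Lambda^N$. *)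

theory Defs
  imports Main "HOL-Library.Countable_Set"
begin

text \<open>Degrees: elements of N^k are represented as functions nat => nat vanishing
  from index k on. Addition in N^k is pointwise.\<close>

definition in_Nk :: "nat \<Rightarrow> (nat \<Rightarrow> nat) \<Rightarrow> bool" where
  "in_Nk k n \<longleftrightarrow> (\<forall>i\<ge>k. n i = 0)"

definition deg_add :: "(nat \<Rightarrow> nat) \<Rightarrow> (nat \<Rightarrow> nat) \<Rightarrow> (nat \<Rightarrow> nat)" where
  "deg_add m n = (\<lambda>i. m i + n i)"

definition deg_pos :: "nat \<Rightarrow> (nat \<Rightarrow> nat) \<Rightarrow> bool" where
  "deg_pos k n \<longleftrightarrow> (\<forall>i<k. 0 < n i)"

text \<open>A k-graph: a countable category with morphism set L, range/source maps r, s
  (returning identity morphisms), partial composition c (c x y = x y, defined when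
  s x = r y), and a degree functor d : L -> N^k with unique factorisation.\<close>

definition is_kgraph ::
  "nat \<Rightarrow> 'a set \<Rightarrow> ('a \<Rightarrow> 'a) \<Rightarrow> ('a \<Rightarrow> 'a) \<Rightarrow> ('a \<Rightarrow> 'a \<Rightarrow> 'a) \<Rightarrow> ('a \<Rightarrow> nat \<Rightarrow> nat) \<Rightarrow> bool"
where
  "is_kgraph k L r s c d \<longleftrightarrow>
     countable L \<and>
     (\<forall>x\<in>L. r x \<in> L \<and> s x \<in> L \<and> r (r x) = r x \<and> s (r x) = r x
              \<and> r (s x) = s x \<and> s (s x) = s x) \<and>
     (\<forall>x\<in>L. \<forall>y\<in>L. s x = r y \<longrightarrow> c x y \<in> L \<and> r (c x y) = r x \<and> s (c x y) = s y) \<and>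
     (\<forall>x\<in>L. c (r x) x = x \<and> c x (s x) = x) \<and>
     (\<forall>x\<in>L. \<forall>y\<in>L. \<forall>z\<in>L. s x = r y \<longrightarrow> s y = r z \<longrightarrow> c (c x y) z = c x (c y z)) \<and>
     (\<forall>x\<in>L. in_Nk k (d x)) \<and>
     (\<forall>x\<in>L. d (r x) = (\<lambda>_. 0)) \<and>
     (\<forall>x\<in>L. \<forall>y\<in>L. s x = r y \<longrightarrow> d (c x y) = deg_add (d x) (d y)) \<and>
     (\<forall>x\<in>L. \<forall>m n. d x = deg_add m n \<longrightarrow>
        (\<exists>!p. fst p \<in> L \<and> snd p \<in> L \<and> s (fst p) = r (snd p) \<and>
              d (fst p) = m \<and> d (snd p) = n \<and> c (fst p) (snd p) = x))"

definition kvertices :: "'a set \<Rightarrow> ('a \<Rightarrow> nat \<Rightarrow> nat) \<Rightarrow> 'a set" where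
  "kvertices L d = {x\<in>L. d x = (\<lambda>_. 0)}"

definition paths_from :: "'a set \<Rightarrow> ('a \<Rightarrow> 'a) \<Rightarrow> ('a \<Rightarrow> nat \<Rightarrow> nat) \<Rightarrow> 'a \<Rightarrow> (nat \<Rightarrow> nat) \<Rightarrow> 'a set" where
  "paths_from L r d v n = {x\<in>L. r x = v \<and> d x = n}"

definition paths_to :: "'a set \<Rightarrow> ('a \<Rightarrow> 'a) \<Rightarrow> ('a \<Rightarrow> nat \<Rightarrow> nat) \<Rightarrow> (nat \<Rightarrow> nat) \<Rightarrow> 'a \<Rightarrow> 'a set" where
  "paths_to L s d n v = {x\<in>L. s x = v \<and> d x = n}"

definition paths_between :: "'a set \<Rightarrow> ('a \<Rightarrow> 'a) \<Rightarrow> ('a \<Rightarrow> 'a) \<Rightarrow> ('a \<Rightarrow> nat \<Rightarrow> nat) \<Rightarrow> 'a \<Rightarrow> (nat \<Rightarrow> nat) \<Rightarrow> 'a \<Rightarrow> 'a set" where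
  "paths_between L r s d u n v = {x\<in>L. r x = u \<and> d x = n \<and> s x = v}"

definition row_finite where
  "row_finite k L r d \<longleftrightarrow> (\<forall>v\<in>kvertices L d. \<forall>n. in_Nk k n \<longrightarrow> finite (paths_from L r d v n))"

definition no_sources where
  "no_sources k L r d \<longleftrightarrow> (\<forall>v\<in>kvertices L d. \<forall>n. in_Nk k n \<longrightarrow> n \<noteq> (\<lambda>_. 0) \<longrightarrow> paths_from L r d v n \<noteq> {})"

definition no_sinks where
  "no_sinks k L s d \<longleftrightarrow> (\<forall>v\<in>kvertices L d. \<forall>n. in_Nk k n \<longrightarrow> n \<noteq> (\<lambda>_. 0) \<longrightarrow> paths_to L s d n v \<noteq> {})"

definition strongly_connected where
  "strongly_connected k L r s d \<longleftrightarrow>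
     (\<forall>u\<in>kvertices L d. \<forall>v\<in>kvertices L d. \<exists>N. in_Nk k N \<and> deg_pos k N \<and> paths_between L r s d u N v \<noteq> {})"

definition cofinal where
  "cofinal k L r s d \<longleftrightarrow>
     (\<forall>v\<in>kvertices L d. \<forall>w\<in>kvertices L d. \<exists>N. in_Nk k N \<and>
        (\<forall>a\<in>paths_from L r d w N. {x\<in>L. r x = v \<and> s x = s a} \<noteq> {}))"

end

theory Submission
  imports Defs
begin

text \<open>Since the degree 0 is allowed in the definition of cofinality, cofinality towards v
  from w follows from a single path from w to v, so (1) is immediate. For (2), fix the
  target u and use finiteness of the vertex set to bound all degrees witnessing
  cofinality towards u by one M. Take a path \<lambda> of degree (M,...,M) ending at v (no
  sinks), factor it as \<alpha>\<beta> with d \<alpha> the cofinality degree of r \<lambda>, and replace \<alpha> by a path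
  \<mu> from u to s \<alpha>. Then \<mu>\<beta> goes from u to v, and d \<beta> = (M,...,M) - d \<alpha> > 0.\<close>

locale kgraph =
  fixes k :: nat and L :: "'a set" and r s :: "'a \<Rightarrow> 'a"
    and c :: "'a \<Rightarrow> 'a \<Rightarrow> 'a" and d :: "'a \<Rightarrow> nat \<Rightarrow> nat"
  assumes kgraph: "is_kgraph k L r s c d"
begin

lemma range_in: "x \<in> L \<Longrightarrow> r x \<in> L"
  and source_in: "x \<in> L \<Longrightarrow> s x \<in> L"
  and source_range: "x \<in> L \<Longrightarrow> s (r x) = r x"
  and range_source: "x \<in> L \<Longrightarrow> r (s x) = s x"
  and source_source: "x \<in> L \<Longrightarrow> s (s x) = s x"
  and comp_in: "\<lbrakk>x \<in> L; y \<in> L; s x = r y\<rbrakk> \<Longrightarrow> c x y \<in> L"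
  and range_comp: "\<lbrakk>x \<in> L; y \<in> L; s x = r y\<rbrakk> \<Longrightarrow> r (c x y) = r x"
  and source_comp: "\<lbrakk>x \<in> L; y \<in> L; s x = r y\<rbrakk> \<Longrightarrow> s (c x y) = s y"
  and comp_range: "x \<in> L \<Longrightarrow> c (r x) x = x"
  and comp_source: "x \<in> L \<Longrightarrow> c x (s x) = x"
  and degree_in_Nk: "x \<in> L \<Longrightarrow> in_Nk k (d x)"
  and degree_range: "x \<in> L \<Longrightarrow> d (r x) = (\<lambda>_. 0)"
  and degree_comp: "\<lbrakk>x \<in> L; y \<in> L; s x = r y\<rbrakk> \<Longrightarrow> d (c x y) = deg_add (d x) (d y)"
  and unique_factorisation: "\<lbrakk>x \<in> L; d x = deg_add m n\<rbrakk> \<Longrightarrow>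
     \<exists>!p. fst p \<in> L \<and> snd p \<in> L \<and> s (fst p) = r (snd p) \<and>
          d (fst p) = m \<and> d (snd p) = n \<and> c (fst p) (snd p) = x"
  using kgraph unfolding is_kgraph_def by blast+

lemma factorisation:
  assumes "x \<in> L" "d x = deg_add m n"
  obtains a b where "a \<in> L" "b \<in> L" "s a = r b" "d a = m" "d b = n" "c a b = x"
  using unique_factorisation[OF assms] by metis

lemma degree_source: "x \<in> L \<Longrightarrow> d (s x) = (\<lambda>_. 0)"
  by (metis degree_range range_source source_in)

text \<open>Both (r a, a) and (a, s a) factorise a into two morphisms of degree 0.\<close>

lemma degree_zero_is_vertex:
  assumes a: "a \<in> L" and da: "d a = (\<lambda>_. 0)"
  shows "r a = a \<and> s a = a"
proof -
  have "d a = deg_add (\<lambda>_. 0) (\<lambda>_. 0)" using da by (simp add: deg_add_def)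
  from unique_factorisation[OF a this]
  obtain q where "\<forall>p. fst p \<in> L \<and> snd p \<in> L \<and> s (fst p) = r (snd p) \<and>
      d (fst p) = (\<lambda>_. 0) \<and> d (snd p) = (\<lambda>_. 0) \<and> c (fst p) (snd p) = a \<longrightarrow> p = q"
    by (rule ex1E)
  then have "(r a, a) = q" "(a, s a) = q"
    using a da range_in source_in source_range range_source degree_range degree_source
      comp_range comp_source by simp_all
  then show ?thesis by auto
qed

lemma kvertices_iff: "v \<in> kvertices L d \<longleftrightarrow> v \<in> L \<and> d v = (\<lambda>_. 0)"
  by (simp add: kvertices_def)

lemma paths_from_degree_zero:
  "v \<in> kvertices L d \<Longrightarrow> paths_from L r d v (\<lambda>_. 0) = {v}"
  using degree_zero_is_vertex by (auto simp: paths_from_def kvertices_iff)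

lemma strongly_connected_imp_cofinal:
  assumes "strongly_connected k L r s d"
  shows "cofinal k L r s d"
  unfolding cofinal_def
proof (intro ballI)
  fix v w assume v: "v \<in> kvertices L d" and w: "w \<in> kvertices L d"
  with assms obtain x where "x \<in> L" "r x = v" "s x = w"
    unfolding strongly_connected_def paths_between_def by blast
  then have "\<forall>a\<in>paths_from L r d w (\<lambda>_. 0). {x \<in> L. r x = v \<and> s x = s a} \<noteq> {}"
    using paths_from_degree_zero[OF w] source_source by auto
  then show "\<exists>N. in_Nk k N \<and> (\<forall>a\<in>paths_from L r d w N. {x \<in> L. r x = v \<and> s x = s a} \<noteq> {})"
    by (auto simp: in_Nk_def)
qed

lemma cofinal_uniform_degree_bound:
  assumes cofinal: "cofinal k L r s d" and fin: "finite (kvertices L d)"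
    and u: "u \<in> kvertices L d"
  obtains M where "\<And>x. x \<in> kvertices L d \<Longrightarrow> \<exists>N. in_Nk k N \<and> (\<forall>i. N i < M) \<and>
      (\<forall>a\<in>paths_from L r d x N. {y \<in> L. r y = u \<and> s y = s a} \<noteq> {})"
proof -
  have "\<forall>x\<in>kvertices L d. \<exists>N. in_Nk k N \<and>
      (\<forall>a\<in>paths_from L r d x N. {y \<in> L. r y = u \<and> s y = s a} \<noteq> {})"
    using cofinal u unfolding cofinal_def by blast
  then obtain NN where NN: "\<And>x. x \<in> kvertices L d \<Longrightarrow> in_Nk k (NN x) \<and>
      (\<forall>a\<in>paths_from L r d x (NN x). {y \<in> L. r y = u \<and> s y = s a} \<noteq> {})"
    by metis
  define M where "M = 1 + (\<Sum>x\<in>kvertices L d. \<Sum>i<k. NN x i)"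
  have "NN x i < M" if x: "x \<in> kvertices L d" for x i
  proof (cases "i < k")
    case True
    have "NN x i \<le> (\<Sum>i<k. NN x i)" using True by (intro member_le_sum) auto
    also have "\<dots> \<le> (\<Sum>x\<in>kvertices L d. \<Sum>i<k. NN x i)"
      using x fin by (intro member_le_sum) auto
    finally show ?thesis unfolding M_def by simp
  next
    case False
    then show ?thesis using NN[OF x] by (simp add: in_Nk_def M_def)
  qed
  with NN that show thesis by blast
qed

lemma path_to_vertex_of_degree:
  assumes "no_sinks k L s d" "v \<in> kvertices L d" "in_Nk k n"
  obtains x where "x \<in> L" "s x = v" "d x = n"
proof (cases "n = (\<lambda>_. 0)")
  case True
  then show thesis
    using that assms(2) degree_zero_is_vertex by (auto simp: kvertices_iff)
next
  case False
  then show thesis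
    using that assms unfolding no_sinks_def paths_to_def by blast
qed

lemma cofinal_imp_strongly_connected:
  assumes cofinal: "cofinal k L r s d" and no_sinks: "no_sinks k L s d"
    and fin: "finite (kvertices L d)"
  shows "strongly_connected k L r s d"
  unfolding strongly_connected_def
proof (intro ballI)
  fix u v assume u: "u \<in> kvertices L d" and v: "v \<in> kvertices L d"
  obtain M where M: "\<And>x. x \<in> kvertices L d \<Longrightarrow> \<exists>N. in_Nk k N \<and> (\<forall>i. N i < M) \<and>
      (\<forall>a\<in>paths_from L r d x N. {y \<in> L. r y = u \<and> s y = s a} \<noteq> {})"
    using cofinal_uniform_degree_bound[OF cofinal fin u] by blast
  define D where "D = (\<lambda>i. if i < k then M else 0)"
  have "in_Nk k D" by (simp add: D_def in_Nk_def)
  with no_sinks v obtain lam where lam: "lam \<in> L" "s lam = v" "d lam = D"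
    by (rule path_to_vertex_of_degree)
  have "r lam \<in> kvertices L d"
    using lam(1) range_in degree_range by (simp add: kvertices_iff)
  then obtain N where N: "in_Nk k N" "\<forall>i. N i < M"
    and cof: "\<forall>a\<in>paths_from L r d (r lam) N. {y \<in> L. r y = u \<and> s y = s a} \<noteq> {}"
    using M by blast
  define E where "E = (\<lambda>i. D i - N i)"
  have "N i \<le> D i" for i
    using N(1) less_imp_le[OF N(2)[rule_format, of i]] by (simp add: D_def in_Nk_def)
  then have "d lam = deg_add N E"
    by (simp add: lam(3) deg_add_def E_def)
  then obtain al be where ab: "al \<in> L" "be \<in> L" "s al = r be" "d al = N" "d be = E"
    "c al be = lam"
    by (rule factorisation[OF lam(1)])
  have "r al = r lam"
    using range_comp[OF ab(1-3)] ab(6) by simp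
  then have "al \<in> paths_from L r d (r lam) N"
    using ab(1,4) by (simp add: paths_from_def)
  then have "{y \<in> L. r y = u \<and> s y = s al} \<noteq> {}"
    by (rule cof[rule_format])
  then obtain mu where mu: "mu \<in> L" "r mu = u" "s mu = r be"
    using ab(3) by auto
  have "s be = v"
    using source_comp[OF ab(1-3)] ab(6) lam(2) by simp
  let ?p = "c mu be"
  have p: "?p \<in> L" "r ?p = u" "s ?p = v" "d ?p = deg_add (d mu) E"
    using comp_in[OF mu(1) ab(2) mu(3)] range_comp[OF mu(1) ab(2) mu(3)]
      source_comp[OF mu(1) ab(2) mu(3)] degree_comp[OF mu(1) ab(2) mu(3)] mu(2) ab(5) \<open>s be = v\<close>
    by simp_all
  have "deg_pos k (d ?p)"
    unfolding deg_pos_def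
  proof (intro allI impI)
    fix i assume "i < k"
    then have "E i = M - N i" by (simp add: E_def D_def)
    then show "0 < d ?p i"
      using N(2) by (simp add: p(4) deg_add_def)
  qed
  with p degree_in_Nk[OF p(1)]
  show "\<exists>N. in_Nk k N \<and> deg_pos k N \<and> paths_between L r s d u N v \<noteq> {}"
    by (auto simp: paths_between_def)
qed

end

theorem proposition4p5:
  fixes k :: nat and L :: "'a set" and r s :: "'a \<Rightarrow> 'a"
    and c :: "'a \<Rightarrow> 'a \<Rightarrow> 'a" and d :: "'a \<Rightarrow> nat \<Rightarrow> nat"
  assumes "is_kgraph k L r s c d" and "row_finite k L r d" and "no_sources k L r d"
  shows "(strongly_connected k L r s d \<longrightarrow> cofinal k L r s d)
     \<and> (cofinal k L r s d \<and> no_sinks k L s d \<and> finite (kvertices L d)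
          \<longrightarrow> strongly_connected k L r s d)"
proof -
  interpret kgraph k L r s c d by (rule kgraph.intro) (fact assms(1))
  show ?thesis
    using strongly_connected_imp_cofinal cofinal_imp_strongly_connected by blast
qed

end
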